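(* Fix $k=1$ and $\epsilon$ with $0\le\epsilon\le1/2$, and assume $\sqrt n\le m^{\epsilon}$. Any deterministic coverage oracle that stores a datastructure of at most $b=nm^{1-2\epsilon}$ bits does not attain an approximation ratio of $O(n^{1/2-\delta})$ for any constant $\delta>0$.
   Context: A set system with $n$ items and $m$ sets is a pair $(\mathcal X,\mathcal I)$ with $\mathcal X=\{1,\dots,n\}$ and $\mathcal I$ an indexed family of $m$ subsets of $\mathcal X$. For $k\ge1$ and a query $Q\subseteq\mathcal X$, $OPT(k,\mathcal X,\mathcal I,Q)=\max\{|(\bigcup_{S\in\mathcal J}S)\cap Q| : \mathcal J\subseteq\mathcal I,|\mathcal J|\le k\}$. A deterministic coverage oracle consists of a deterministic static stage mapping $(n,m,k,(\mathcal X,\mathcal I))$ to a bit string $\mathcal D$ (the datastructure), and a deterministic dynamic stage mapping $(\mathcal D,Q)$, for $Q\subseteq\mathcal X$, to (indices of) $\mathcal J\subseteq\mathcal I$ with $|\mathcal J|\le k$, without access to $(\mathcal X,\mathcal I)$; $\mathcal A(k,\mathcal X,\mathcal I,Q)=|(\bigcup_{S\in\mathcal J}S)\cap Q|$. The approximation ratio is $\max OPT/\mathcal A$ over all set systems with $n$ items and $m$ sets and all queries $Q$. No computational restrictions are assumed. *)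

theory Defs
  imports Complex_Main
begin

definition valid_system :: "nat \<Rightarrow> nat \<Rightarrow> nat set list \<Rightarrow> bool" where
  "valid_system n m I \<longleftrightarrow> length I = m \<and> (\<forall>S\<in>set I. S \<subseteq> {1..n})"

definition coverage :: "nat set list \<Rightarrow> nat set \<Rightarrow> nat set \<Rightarrow> nat" where
  "coverage I J Q = card ((\<Union>j\<in>J. I ! j) \<inter> Q)"

definition OPT :: "nat \<Rightarrow> nat set list \<Rightarrow> nat set \<Rightarrow> nat" where
  "OPT k I Q = Max {coverage I J Q | J. J \<subseteq> {..<length I} \<and> card J \<le> k}"

text \<open>A deterministic coverage cov. data structure is a pair (static, dynamic):
  static n m k I is the datastructure (bit string); dynamic D Q returns indices J.
  The dynamic stage only sees D and Q.\<close>
definition well_formed_cov_ds ::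
  "nat \<Rightarrow> nat \<Rightarrow> nat \<Rightarrow> (nat \<Rightarrow> nat \<Rightarrow> nat \<Rightarrow> nat set list \<Rightarrow> bool list)
     \<Rightarrow> (bool list \<Rightarrow> nat set \<Rightarrow> nat set) \<Rightarrow> bool" where
  "well_formed_cov_ds n m k static dynamic \<longleftrightarrow>
     (\<forall>I Q. valid_system n m I \<longrightarrow> Q \<subseteq> {1..n} \<longrightarrow>
        dynamic (static n m k I) Q \<subseteq> {..<m} \<and> card (dynamic (static n m k I) Q) \<le> k)"

definition alg_value ::
  "nat \<Rightarrow> nat \<Rightarrow> nat \<Rightarrow> (nat \<Rightarrow> nat \<Rightarrow> nat \<Rightarrow> nat set list \<Rightarrow> bool list)
     \<Rightarrow> (bool list \<Rightarrow> nat set \<Rightarrow> nat set) \<Rightarrow> nat set list \<Rightarrow> nat set \<Rightarrow> nat" where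
  "alg_value n m k static dynamic I Q = coverage I (dynamic (static n m k I) Q) Q"

text \<open>The approximation ratio (max OPT/A over all instances) exceeds R, written without
  division: some instance has OPT > R * A (A = 0 < OPT counts as infinite ratio).\<close>
definition ratio_exceeds ::
  "nat \<Rightarrow> nat \<Rightarrow> nat \<Rightarrow> (nat \<Rightarrow> nat \<Rightarrow> nat \<Rightarrow> nat set list \<Rightarrow> bool list)
     \<Rightarrow> (bool list \<Rightarrow> nat set \<Rightarrow> nat set) \<Rightarrow> real \<Rightarrow> bool" where
  "ratio_exceeds n m k static dynamic R \<longleftrightarrow>
     (\<exists>I Q. valid_system n m I \<and> Q \<subseteq> {1..n} \<and>
        real (OPT k I Q) > R * real (alg_value n m k static dynamic I Q))"

end

theory Submission
  imports Defs "HOL-Computational_Algebra.Polynomial" "HOL-Computational_Algebra.Primes"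
    "HOL-Combinatorics.Permutations"
begin

(* Proof idea (an incompressibility argument).
   Let p be a prime and d \<ge> 1.  On the p^2 items of a p \<times> p grid, the graphs of the
   m = p^(d+1) polynomials of degree \<le> d over GF(p) form a family of m sets of size p
   any two of which meet in at most d points (a nonzero polynomial of degree \<le> d has at
   most d roots).  For every permutation \<sigma> of {..<m} put the graph of polynomial \<sigma> j at
   index j.  If an oracle with k = 1 had ratio at most R with R * d < p, then on the query
   "graph number \<sigma> j" it would have to answer exactly {j}; so \<sigma> could be decoded from
   the datastructure, and m! distinct datastructures would be needed.  With at most m bits
   there are fewer than 2^(m+1) \<le> m! of them, a contradiction. *)

section \<open>Roots of integer polynomials modulo a prime\<close>

lemma int_poly_divisible_if_many_roots_mod_prime:
  fixes p :: int and q :: "int poly"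
  assumes "prime p" "finite R" "\<forall>a\<in>R. \<forall>b\<in>R. a \<noteq> b \<longrightarrow> \<not> p dvd (a - b)"
    "\<forall>r\<in>R. p dvd poly q r" "degree q < card R"
  shows "\<exists>w. q = smult p w"
  using assms
proof (induction "degree q" arbitrary: q R)
  case 0
  then obtain r where r: "r \<in> R" by (metis card.empty less_nat_zero_code ex_in_conv)
  from "0.hyps" obtain c where qc: "q = [:c:]" by (metis degree_eq_zeroE)
  with 0 r have "p dvd c" by auto
  then obtain t where "c = p * t" by blast
  with qc show ?case by (intro exI[of _ "[:t:]"]) simp
next
  case (Suc k)
  then obtain a where a: "a \<in> R" by (metis card.empty less_nat_zero_code ex_in_conv)
  define q' where "q' = synthetic_div q a"
  have q_split: "q = [:-a, 1:] * q' + [:poly q a:]"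
    unfolding q'_def by (rule synthetic_div_correct'[symmetric])
  have deg_q': "k = degree q'" unfolding q'_def using Suc.hyps(2) by (simp add: degree_synthetic_div)
  have "\<forall>r\<in>R-{a}. p dvd poly q' r"
  proof
    fix r assume r: "r \<in> R - {a}"
    have "poly q r = (r - a) * poly q' r + poly q a" by (subst q_split) (simp add: algebra_simps)
    moreover have "p dvd poly q r" "p dvd poly q a" using Suc.prems r a by auto
    ultimately have "p dvd (r - a) * poly q' r" by (metis dvd_add_right_iff add.commute)
    moreover have "\<not> p dvd (r - a)" using Suc.prems(3) r a by auto
    ultimately show "p dvd poly q' r" using Suc.prems(1) prime_dvd_mult_iff by blast
  qed
  moreover have "degree q' < card (R - {a})" using Suc.prems(2,5) Suc.hyps(2) deg_q' a by simp
  ultimately obtain w where w: "q' = smult p w"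
    using Suc.hyps(1)[OF deg_q'] Suc.prems by (meson Diff_subset finite_Diff subsetD)
  from Suc.prems a obtain t where t: "poly q a = p * t" by blast
  have "q = smult p ([:-a, 1:] * w + [:t:])"
    using q_split w t by (simp add: smult_add_right)
  then show ?case by blast
qed

section \<open>Designs from polynomials over GF(p)\<close>

definition design :: "nat \<Rightarrow> nat \<Rightarrow> nat \<Rightarrow> nat \<Rightarrow> (nat \<Rightarrow> nat set) \<Rightarrow> bool" where
  "design n m s t F \<longleftrightarrow> (\<forall>u<m. F u \<subseteq> {1..n} \<and> card (F u) = s) \<and>
     (\<forall>u<m. \<forall>v<m. u \<noteq> v \<longrightarrow> card (F u \<inter> F v) \<le> t)"

(* The i-th base-p digit of u; the numbers u < p^(d+1) encode all coefficient vectors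
   of polynomials of degree \<le> d over GF(p). *)
definition digit :: "nat \<Rightarrow> nat \<Rightarrow> nat \<Rightarrow> nat" where
  "digit p u i = u div p ^ i mod p"

definition digit_poly :: "nat \<Rightarrow> nat \<Rightarrow> nat \<Rightarrow> nat \<Rightarrow> nat" where
  "digit_poly p d u x = (\<Sum>i\<le>d. digit p u i * x ^ i)"

(* The graph {(x, f(x) mod p) | x < p} of polynomial u, with the grid cell (x, y)
   numbered x * p + y + 1 so that it lies in {1..p^2}. *)
definition poly_graph :: "nat \<Rightarrow> nat \<Rightarrow> nat \<Rightarrow> nat set" where
  "poly_graph p d u = (\<lambda>x. x * p + digit_poly p d u x mod p + 1) ` {..<p}"

lemma mod_power_eq_if_digits_eq:
  assumes "\<forall>i<k. digit p u i = digit p v i"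
  shows "u mod p ^ k = v mod p ^ k"
  using assms
proof (induction k)
  case 0 then show ?case by simp
next
  case (Suc k)
  have "u mod p ^ Suc k = p ^ k * digit p u k + u mod p ^ k" for u
    by (simp only: power_Suc2 mod_mult2_eq digit_def)
  then show ?case using Suc by simp
qed

lemma poly_graph_subset:
  assumes "p > 0" shows "poly_graph p d u \<subseteq> {1..p^2}"
proof
  fix z assume "z \<in> poly_graph p d u"
  then obtain x where x: "x < p" "z = x * p + digit_poly p d u x mod p + 1"
    unfolding poly_graph_def by auto
  have "digit_poly p d u x mod p < p" using assms by simp
  then have "z \<le> x * p + p" using x by linarith
  also have "\<dots> \<le> (p - 1) * p + p" using x by (intro add_right_mono mult_right_mono) auto
  also have "\<dots> = p ^ 2" using assms by (cases p) (auto simp: power2_eq_square)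
  finally show "z \<in> {1..p^2}" using x by simp
qed

(* The column x can be read off a cell number, so a graph has one cell per column. *)
lemma poly_graph_inj:
  assumes "p > 0" shows "inj_on (\<lambda>x. x * p + digit_poly p d u x mod p + 1) {..<p}"
proof (rule inj_onI)
  fix x y assume "x * p + digit_poly p d u x mod p + 1 = y * p + digit_poly p d u y mod p + 1"
  then have "(x * p + digit_poly p d u x mod p) div p = (y * p + digit_poly p d u y mod p) div p"
    by simp
  then show "x = y" using assms by simp
qed

lemma poly_graph_card:
  assumes "p > 0" shows "card (poly_graph p d u) = p"
  unfolding poly_graph_def using card_image[OF poly_graph_inj[OF assms]] by simp

lemma poly_graph_inter_card:
  assumes "p > 0"
  shows "card (poly_graph p d u \<inter> poly_graph p d v)
           \<le> card {x. x < p \<and> digit_poly p d u x mod p = digit_poly p d v x mod p}"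
    (is "_ \<le> card ?A")
proof -
  let ?cell = "\<lambda>x. x * p + digit_poly p d u x mod p + 1"
  have "poly_graph p d u \<inter> poly_graph p d v \<subseteq> ?cell ` ?A"
  proof
    fix z assume "z \<in> poly_graph p d u \<inter> poly_graph p d v"
    then obtain x y where xy: "x < p" "y < p" "z = ?cell x"
      "z = y * p + digit_poly p d v y mod p + 1"
      unfolding poly_graph_def by auto
    then have "(x * p + digit_poly p d u x mod p) div p = (y * p + digit_poly p d v y mod p) div p"
      by simp
    then have "x = y" using assms by simp
    with xy have "x \<in> ?A" by auto
    then show "z \<in> ?cell ` ?A" using xy(3) by (rule image_eqI[rotated])
  qed
  then have "card (poly_graph p d u \<inter> poly_graph p d v) \<le> card (?cell ` ?A)"
    by (rule card_mono[rotated]) simp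
  also have "\<dots> \<le> card ?A" by (rule card_image_le) simp
  finally show ?thesis .
qed

lemma digit_poly_agreement_card:
  assumes p: "prime p" and u: "u < p ^ (d+1)" and v: "v < p ^ (d+1)" and uv: "u \<noteq> v"
  shows "card {x. x < p \<and> digit_poly p d u x mod p = digit_poly p d v x mod p} \<le> d"
proof (rule ccontr)
  define A where "A = {x. x < p \<and> digit_poly p d u x mod p = digit_poly p d v x mod p}"
  assume "\<not> card A \<le> d"
  then have many: "d < card A" by simp
  have p0: "p > 0" using p prime_gt_0_nat by blast
  define q :: "int poly"
    where "q = (\<Sum>i\<le>d. monom (int (digit p u i) - int (digit p v i)) i)"
  have deg_q: "degree q \<le> d" unfolding q_def
    by (intro degree_sum_le) (auto intro: order_trans[OF degree_monom_le])
  have poly_q: "poly q (int x) = int (digit_poly p d u x) - int (digit_poly p d v x)" for x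
    unfolding q_def digit_poly_def by (simp add: poly_sum poly_monom sum_subtractf algebra_simps)
  have roots: "\<forall>r\<in>int ` A. int p dvd poly q r"
  proof
    fix r assume "r \<in> int ` A"
    then obtain x where x: "x \<in> A" "r = int x" by auto
    then have "int (digit_poly p d u x) mod int p = int (digit_poly p d v x) mod int p"
      unfolding A_def by (simp flip: of_nat_mod)
    then show "int p dvd poly q r" using x poly_q by (simp add: mod_eq_dvd_iff)
  qed
  have incongruent: "\<forall>a\<in>int ` A. \<forall>b\<in>int ` A. a \<noteq> b \<longrightarrow> \<not> int p dvd (a - b)"
  proof (intro ballI impI)
    fix a b assume ab: "a \<in> int ` A" "b \<in> int ` A" "a \<noteq> b"
    then have "\<bar>a - b\<bar> < int p" "a - b \<noteq> 0" unfolding A_def by auto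
    then show "\<not> int p dvd (a - b)" using dvd_imp_le_int[of "a - b" "int p"] by auto
  qed
  have "card (int ` A) = card A" by (simp add: card_image)
  with many deg_q have "degree q < card (int ` A)" by simp
  then obtain w where w: "q = smult (int p) w"
    using int_poly_divisible_if_many_roots_mod_prime[of "int p" "int ` A" q] p roots incongruent
    unfolding A_def by auto
  have "digit p u i = digit p v i" if i: "i < d + 1" for i
  proof -
    have "int (digit p u i) - int (digit p v i) = coeff q i"
      unfolding q_def using i by (simp add: coeff_sum coeff_monom)
    then have "int p dvd (int (digit p u i) - int (digit p v i))" using w by simp
    then have "int (digit p u i) mod int p = int (digit p v i) mod int p"
      using mod_eq_dvd_iff by blast
    then show ?thesis using p0 by (simp add: digit_def flip: of_nat_mod)
  qed
  then have "u mod p ^ (d+1) = v mod p ^ (d+1)" by (intro mod_power_eq_if_digits_eq) blast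
  with u v uv show False by simp
qed

lemma polynomial_design:
  assumes p: "prime p"
  shows "design (p^2) (p^(d+1)) p d (poly_graph p d)"
proof -
  have p0: "p > 0" using p prime_gt_0_nat by blast
  show ?thesis unfolding design_def
    using poly_graph_subset[OF p0] poly_graph_card[OF p0]
      order_trans[OF poly_graph_inter_card[OF p0] digit_poly_agreement_card[OF p]] by blast
qed

section \<open>Counting datastructures\<close>

lemma card_short_bitstrings_less_fact:
  assumes "5 \<le> m"
  shows "card {xs :: bool list. set xs \<subseteq> UNIV \<and> length xs \<le> m} < fact m"
proof -
  have geometric: "(\<Sum>i\<le>k. (2::nat) ^ i) < 2 ^ Suc k" for k
    by (induction k) auto
  have "(2::nat) ^ Suc m \<le> fact m" using assms
  proof (induction m rule: dec_induct)
    case base then show ?case by (simp add: fact_numeral)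
  next
    case (step k)
    have "(2::nat) ^ Suc (Suc k) = 2 * 2 ^ Suc k" by simp
    also have "\<dots> \<le> Suc k * fact k" using step by (intro mult_mono) auto
    finally show ?case by simp
  qed
  moreover have "card {xs :: bool list. set xs \<subseteq> UNIV \<and> length xs \<le> m} = (\<Sum>i\<le>m. 2 ^ i)"
    using card_lists_length_le[of "UNIV :: bool set" m] by simp
  ultimately show ?thesis using geometric[of m] by linarith
qed

section \<open>Oracles on permuted designs\<close>

lemma coverage_singleton_le_OPT:
  assumes "j < length I" shows "coverage I {j} Q \<le> OPT 1 I Q"
proof -
  let ?vals = "{coverage I J Q | J. J \<subseteq> {..<length I} \<and> card J \<le> 1}"
  have "?vals \<subseteq> (\<lambda>J. coverage I J Q) ` Pow {..<length I}" by auto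
  then have "finite ?vals" by (rule finite_subset) simp
  moreover have "coverage I {j} Q \<in> ?vals" using assms by auto
  ultimately show ?thesis unfolding OPT_def by (rule Max_ge)
qed

definition permuted_system :: "(nat \<Rightarrow> nat set) \<Rightarrow> nat \<Rightarrow> (nat \<Rightarrow> nat) \<Rightarrow> nat set list" where
  "permuted_system F m \<sigma> = map (\<lambda>j. F (\<sigma> j)) [0..<m]"

lemma permuted_system_valid:
  assumes "design n m s t F" "\<sigma> permutes {..<m}"
  shows "valid_system n m (permuted_system F m \<sigma>)"
  using assms permutes_in_image[OF assms(2)]
  unfolding valid_system_def permuted_system_def design_def by auto

lemma permuted_system_nth:
  assumes "j < m" shows "permuted_system F m \<sigma> ! j = F (\<sigma> j)"
  using assms unfolding permuted_system_def by simp

lemma permuted_system_other_coverage: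
  assumes des: "design n m s t F" and \<sigma>: "\<sigma> permutes {..<m}" and j: "j < m"
    and J: "J \<subseteq> {..<m}" "card J \<le> 1" "J \<noteq> {j}"
  shows "coverage (permuted_system F m \<sigma>) J (F (\<sigma> j)) \<le> t"
proof (cases "J = {}")
  case True then show ?thesis unfolding coverage_def by simp
next
  case False
  have "finite J" using J(1) finite_subset by blast
  with False J(2) have "card J = 1" by (simp add: le_Suc_eq)
  then obtain j' where "J = {j'}" by (rule card_1_singletonE)
  with J have j': "J = {j'}" "j' < m" "j' \<noteq> j" by auto
  then have "\<sigma> j' \<noteq> \<sigma> j" "\<sigma> j' < m" "\<sigma> j < m"
    using permutes_inj[OF \<sigma>] \<sigma> j permutes_in_image by (fastforce simp: inj_eq)+
  then have "card (F (\<sigma> j') \<inter> F (\<sigma> j)) \<le> t" using des unfolding design_def by blast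
  then show ?thesis
    using j' permuted_system_nth[OF \<open>j' < m\<close>] by (simp add: coverage_def)
qed

(* An oracle of ratio \<le> R must answer the query F (\<sigma> j) with exactly {j}: that set
   covers s items, while any other single set covers at most t < s / R of them. *)
lemma oracle_answer_forced:
  fixes R :: real
  assumes des: "design n m s t F" and Rt: "max R 0 * real t < real s"
    and wf: "well_formed_cov_ds n m 1 static dynamic"
    and good: "\<not> ratio_exceeds n m 1 static dynamic R"
    and \<sigma>: "\<sigma> permutes {..<m}" and j: "j < m"
  shows "dynamic (static n m 1 (permuted_system F m \<sigma>)) (F (\<sigma> j)) = {j}"
proof (rule ccontr)
  define I where "I = permuted_system F m \<sigma>"
  define Q where "Q = F (\<sigma> j)"
  define J where "J = dynamic (static n m 1 I) Q"
  assume "dynamic (static n m 1 (permuted_system F m \<sigma>)) (F (\<sigma> j)) \<noteq> {j}"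
  then have J_ne: "J \<noteq> {j}" unfolding J_def I_def Q_def .
  have \<sigma>j: "\<sigma> j < m" using \<sigma> j permutes_in_image by fastforce
  have valid: "valid_system n m I" unfolding I_def using permuted_system_valid[OF des \<sigma>] .
  have Q_sub: "Q \<subseteq> {1..n}" and Q_card: "card Q = s"
    using des \<sigma>j unfolding Q_def design_def by auto
  have J: "J \<subseteq> {..<m}" "card J \<le> 1"
    using wf valid Q_sub unfolding well_formed_cov_ds_def J_def by auto
  have "coverage I {j} Q = s" unfolding coverage_def I_def Q_def
    using permuted_system_nth[OF j] Q_card Q_def by simp
  then have opt: "s \<le> OPT 1 I Q"
    using coverage_singleton_le_OPT[of j I Q] j valid unfolding valid_system_def by simp
  have "alg_value n m 1 static dynamic I Q \<le> t"
    using permuted_system_other_coverage[OF des \<sigma> j J J_ne]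
    unfolding alg_value_def J_def I_def Q_def .
  then have "R * real (alg_value n m 1 static dynamic I Q) \<le> max R 0 * real t"
    by (intro order_trans[OF mult_right_mono[of R "max R 0"]] mult_left_mono) auto
  then have "real (OPT 1 I Q) > R * real (alg_value n m 1 static dynamic I Q)"
    using Rt opt by linarith
  then show False using good valid Q_sub unfolding ratio_exceeds_def by blast
qed

lemma static_inj_on_permutations:
  fixes R :: real
  assumes des: "design n m s t F" and Rt: "max R 0 * real t < real s"
    and wf: "well_formed_cov_ds n m 1 static dynamic"
    and good: "\<not> ratio_exceeds n m 1 static dynamic R"
  shows "inj_on (\<lambda>\<sigma>. static n m 1 (permuted_system F m \<sigma>)) {\<sigma>. \<sigma> permutes {..<m}}"
proof (rule inj_onI)
  fix \<sigma> \<tau> assume \<sigma>: "\<sigma> \<in> {\<sigma>. \<sigma> permutes {..<m}}" and \<tau>: "\<tau> \<in> {\<sigma>. \<sigma> permutes {..<m}}"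
    and same: "static n m 1 (permuted_system F m \<sigma>) = static n m 1 (permuted_system F m \<tau>)"
  note forced = oracle_answer_forced[OF des Rt wf good]
  show "\<sigma> = \<tau>"
  proof
    fix j show "\<sigma> j = \<tau> j"
    proof (cases "j < m")
      case True
      have "\<sigma> j \<in> \<tau> ` {..<m}"
        using \<sigma> \<tau> True permutes_in_image permutes_image by fastforce
      then obtain j' where j': "j' < m" "\<tau> j' = \<sigma> j" by auto
      have "{j} = dynamic (static n m 1 (permuted_system F m \<sigma>)) (F (\<sigma> j))"
        using forced \<sigma> True by simp
      also have "\<dots> = dynamic (static n m 1 (permuted_system F m \<tau>)) (F (\<tau> j'))"
        using same j' by simp
      also have "\<dots> = {j'}" using forced[of \<tau> j'] \<tau> j'(1) by simp
      finally show ?thesis using j' by simp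
    next
      case False
      then have "\<sigma> j = j" "\<tau> j = j"
        using \<sigma> \<tau> permutes_not_in[of _ "{..<m}" j] by auto
      then show ?thesis by simp
    qed
  qed
qed

lemma design_forces_ratio:
  fixes R :: real
  assumes des: "design n m s t F" and Rt: "max R 0 * real t < real s" and m5: "5 \<le> m"
    and wf: "well_formed_cov_ds n m 1 static dynamic"
    and short: "\<forall>I. valid_system n m I \<longrightarrow> length (static n m 1 I) \<le> m"
  shows "ratio_exceeds n m 1 static dynamic R"
proof (rule ccontr)
  assume good: "\<not> ratio_exceeds n m 1 static dynamic R"
  let ?encode = "\<lambda>\<sigma>. static n m 1 (permuted_system F m \<sigma>)"
  let ?strings = "{xs :: bool list. set xs \<subseteq> UNIV \<and> length xs \<le> m}"
  have "?encode ` {\<sigma>. \<sigma> permutes {..<m}} \<subseteq> ?strings"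
    using short permuted_system_valid[OF des] by auto
  then have "card {\<sigma>. \<sigma> permutes {..<m}} \<le> card ?strings"
    using card_inj_on_le[OF static_inj_on_permutations[OF des Rt wf good]]
      finite_lists_length_le[of "UNIV :: bool set" m] by simp
  moreover have "card {\<sigma>. \<sigma> permutes {..<m}} = fact m"
    using card_permutations[of "{..<m}" m] by simp
  ultimately show False using card_short_bitstrings_less_fact[OF m5] by simp
qed

section \<open>Choice of parameters\<close>

lemma grid_parameters:
  fixes \<epsilon> :: real
  assumes d\<epsilon>: "1 \<le> real d * \<epsilon>" and p: "1 \<le> p"
  shows "sqrt (real (p^2)) \<le> real (p^(d+1)) powr \<epsilon>"
    and "real (p^2) * real (p^(d+1)) powr (1 - 2*\<epsilon>) \<le> real (p^(d+1))"
proof -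
  have "0 < real d * \<epsilon>" using d\<epsilon> by linarith
  then have \<epsilon>: "0 < \<epsilon>" by (simp add: zero_less_mult_iff)
  have p1: "1 \<le> real p" using p by simp
  have "real (p^(d+1)) = real p powr real (d+1)"
    using p1 by (subst powr_realpow) auto
  then have m: "real (p^(d+1)) = real p powr (real d + 1)" by (simp add: add.commute)
  have "real p powr 1 \<le> real p powr ((real d + 1) * \<epsilon>)"
    using p1 d\<epsilon> \<epsilon> by (intro powr_mono) (auto simp: algebra_simps)
  then show "sqrt (real (p^2)) \<le> real (p^(d+1)) powr \<epsilon>"
    using p1 unfolding m by (simp add: powr_powr)
  have n: "real (p^2) = real p powr 2" using p1 by (subst powr_numeral) auto
  have "real (p^2) * real (p^(d+1)) powr (1 - 2*\<epsilon>)
          = real p powr 2 * real p powr ((real d + 1) * (1 - 2*\<epsilon>))"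
    unfolding n m powr_powr ..
  also have "\<dots> = real p powr (2 + (real d + 1) * (1 - 2*\<epsilon>))"
    by (rule powr_add[symmetric])
  also have "\<dots> \<le> real p powr (real d + 1)"
    using p1 d\<epsilon> \<epsilon> by (intro powr_mono) (auto simp: algebra_simps)
  finally show "real (p^2) * real (p^(d+1)) powr (1 - 2*\<epsilon>) \<le> real (p^(d+1))"
    unfolding m .
qed

lemma target_ratio_below_design_gap:
  fixes C \<delta> :: real
  assumes p: "1 \<le> p" and big: "max C 0 * real d < real p powr (2*\<delta>)"
  shows "max (C * real (p^2) powr (1/2 - \<delta>)) 0 * real d < real p"
proof -
  have p1: "1 \<le> real p" using p by simp
  have sq: "real (p^2) = real p powr 2" using p1 by (subst powr_numeral) auto
  have n: "real (p^2) powr (1/2 - \<delta>) = real p powr (1 - 2*\<delta>)"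
    unfolding sq powr_powr by (simp add: algebra_simps)
  have pos: "0 < real p powr (1 - 2*\<delta>)" using p1 by simp
  have "max (C * real (p^2) powr (1/2 - \<delta>)) 0 = max C 0 * real p powr (1 - 2*\<delta>)"
    unfolding n using pos by (simp add: max_mult_distrib_right)
  then have "max (C * real (p^2) powr (1/2 - \<delta>)) 0 * real d
          = max C 0 * real d * real p powr (1 - 2*\<delta>)"
    by (simp add: mult_ac)
  also have "\<dots> < real p powr (2*\<delta>) * real p powr (1 - 2*\<delta>)"
    using big pos by simp
  also have "\<dots> = real p" using p1 by (simp flip: powr_add)
  finally show ?thesis .
qed

lemma large_prime_with_large_power:
  fixes Y \<delta> :: real
  assumes \<delta>: "0 < \<delta>"
  shows "\<exists>p. prime p \<and> N \<le> p \<and> Y < real p powr \<delta>"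
proof -
  define X where "X = max Y 0 + 1"
  obtain p :: nat where p: "prime p" "max N (nat \<lceil>X powr (1/\<delta>)\<rceil>) < p"
    using bigger_prime by blast
  have "X powr (1/\<delta>) \<le> real (nat \<lceil>X powr (1/\<delta>)\<rceil>)" by (rule real_nat_ceiling_ge)
  also have "\<dots> < real p" using p(2) by (simp only: of_nat_less_iff max_less_iff_conj)
  finally have root_less: "X powr (1/\<delta>) < real p" .
  have "X = (X powr (1/\<delta>)) powr \<delta>" using \<delta> unfolding X_def by (simp add: powr_powr)
  also have "\<dots> < real p powr \<delta>" using root_less \<delta> by (intro powr_less_mono2) auto
  finally show ?thesis using p unfolding X_def by (intro exI[of _ p]) auto
qed

theorem mainTheorem8:
  fixes \<epsilon> \<delta> :: real
    and static :: "nat \<Rightarrow> nat \<Rightarrow> nat \<Rightarrow> nat set list \<Rightarrow> bool list"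
    and dynamic :: "bool list \<Rightarrow> nat set \<Rightarrow> nat set"
  assumes eps: "0 < \<epsilon>" "\<epsilon> \<le> 1/2"
    and delta: "\<delta> > 0"
    and orc: "\<forall>n m. sqrt (real n) \<le> real m powr \<epsilon> \<longrightarrow> well_formed_cov_ds n m 1 static dynamic"
    and bits: "\<forall>n m I. sqrt (real n) \<le> real m powr \<epsilon> \<longrightarrow> valid_system n m I \<longrightarrow>
                 real (length (static n m 1 I)) \<le> real n * real m powr (1 - 2 * \<epsilon>)"
  shows "\<forall>C::real. \<forall>N0::nat. \<exists>n m. N0 \<le> n \<and> sqrt (real n) \<le> real m powr \<epsilon> \<and>
           ratio_exceeds n m 1 static dynamic (C * real n powr (1/2 - \<delta>))"
proof (intro allI)
  fix C :: real and N0 :: nat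
  define d where "d = nat \<lceil>1/\<epsilon>\<rceil>"
  have "1/\<epsilon> \<le> real d" unfolding d_def by (rule real_nat_ceiling_ge)
  then have d\<epsilon>: "1 \<le> real d * \<epsilon>" using eps by (simp add: field_simps)
  obtain p where p: "prime p" "max N0 5 \<le> p" and big: "max C 0 * real d < real p powr (2*\<delta>)"
    using large_prime_with_large_power[of "2*\<delta>" "max N0 5" "max C 0 * real d"] delta by auto
  define n m where "n = p^2" and "m = p^(d+1)"
  have "p \<le> n" "p \<le> m" using p unfolding n_def m_def
    by (simp_all add: power2_eq_square prime_gt_0_nat)
  then have large: "N0 \<le> n" "5 \<le> m" using p(2) by simp_all
  have admissible: "sqrt (real n) \<le> real m powr \<epsilon>"
    and budget: "real n * real m powr (1 - 2*\<epsilon>) \<le> real m"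
    using grid_parameters[OF d\<epsilon>, of p] p unfolding n_def m_def by auto
  have short: "\<forall>I. valid_system n m I \<longrightarrow> length (static n m 1 I) \<le> m"
  proof (intro allI impI)
    fix I assume "valid_system n m I"
    then have "real (length (static n m 1 I)) \<le> real m" using bits admissible budget by force
    then show "length (static n m 1 I) \<le> m" by simp
  qed
  have "design n m p d (poly_graph p d)"
    using polynomial_design[OF p(1)] unfolding n_def m_def .
  moreover have "max (C * real n powr (1/2 - \<delta>)) 0 * real d < real p"
    using target_ratio_below_design_gap[OF _ big] p unfolding n_def by simp
  moreover have "well_formed_cov_ds n m 1 static dynamic" using orc admissible by blast
  ultimately have "ratio_exceeds n m 1 static dynamic (C * real n powr (1/2 - \<delta>))"
    using design_forces_ratio large(2) short by blast
  then show "\<exists>n m. N0 \<le> n \<and> sqrt (real n) \<le> real m powr \<epsilon> \<and>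
               ratio_exceeds n m 1 static dynamic (C * real n powr (1/2 - \<delta>))"
    using admissible large(1) by blast
qed

end
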